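(* Let $\Omega\subset\mathbb{O}^2$ be open and $M>0$. For $u,v$ in the class $\{w\in OPSH(\Omega)\cap C(\Omega):|w|\le M\}$, the family of measures $\det(Hess_{\mathbb{O}}(u),Hess_{\mathbb{O}}(v))$ is locally uniformly bounded, i.e. for every compact $K\subset\Omega$ there is $C_K$ with $\int_K\det(Hess_{\mathbb{O}}(u),Hess_{\mathbb{O}}(v))\le C_K$ for all such $u,v$.
   Context: $\mathbb{O}$: octonions (basis $e_0=1,\dots,e_7$, $e_p^2=-1$, $e_pe_q=-e_qe_p$ for $p\ne q\ge1$); $\mathbb{O}^2\cong\mathbb{R}^{16}$, $\mathbf{x}_\alpha=\sum_px_{\alpha p}e_p$. $\overline{\partial}_\alpha F=\sum_pe_p\partial F/\partial x_{\alpha p}$, $\partial_\alpha F=\sum_p(\partial F/\partial x_{\alpha p})\overline e_p$, $Hess_{\mathbb{O}}(u)=(\overline\partial_\alpha\partial_\beta u)$, $\det(A,B)=\frac12(a_{11}b_{22}+a_{22}b_{11}-2\operatorname{Re}(a_{12}b_{21}))$. $OPSH(\Omega)$: upper semicontinuous functions subharmonic on every affine octonionic line (translate of $\{(\mathbf{x},\mathbf{a}\mathbf{x})\}$, $\mathbf{a}\in\mathbb{O}$, or of $\{(0,\mathbf{x})\}$). For continuous OPSH $u,v$, $\det(Hess_{\mathbb{O}}(u),Hess_{\mathbb{O}}(v))$ is the mixed octonionic Monge–Ampère measure (Alesker): the unique nonnegative measure equal to $\det(Hess_{\mathbb{O}}(u),Hess_{\mathbb{O}}(v))dV$ for $C^2$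 functions and weakly continuous under locally uniform convergence of continuous OPSH functions. *)

theory Defs
  imports "HOL-Analysis.Analysis"
begin

text \<open>The product type is a Euclidean space of dimension 8 whose
standard orthonormal basis (Basis) consists of the real unit and seven
imaginary units e_p with e_p^2 = -1 that pairwise anticommute.\<close>

type_synonym quat = "complex \<times> complex"
type_synonym oct = "quat \<times> quat"

definition qconj :: "quat \<Rightarrow> quat" where
  "qconj x = (cnj (fst x), - snd x)"

definition qmul :: "quat \<Rightarrow> quat \<Rightarrow> quat" where
  "qmul x y = (fst x * fst y - cnj (snd y) * snd x, snd y * fst x + snd x * cnj (fst y))"

definition oconj :: "oct \<Rightarrow> oct" where
  "oconj x = (qconj (fst x), - snd x)"

definition omul :: "oct \<Rightarrow> oct \<Rightarrow> oct" where
  "omul x y = (qmul (fst x) (fst y) - qmul (qconj (snd y)) (snd x),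
               qmul (snd y) (fst x) + qmul (snd x) (qconj (fst y)))"

definition oone :: oct where
  "oone = ((1, 0), (0, 0))"

definition ore :: "oct \<Rightarrow> real" where
  "ore x = x \<bullet> oone"

type_synonym oct2 = "oct \<times> oct"

text \<open>Direction of the real coordinate x_{alpha p} (alpha in {1,2}, p a basis octonion).\<close>
definition odir :: "nat \<Rightarrow> oct \<Rightarrow> oct2" where
  "odir \<alpha> e = (if \<alpha> = 1 then (e, 0) else (0, e))"

definition pd :: "(oct2 \<Rightarrow> real) \<Rightarrow> oct2 \<Rightarrow> oct2 \<Rightarrow> real" where
  "pd F v x = deriv (\<lambda>t. F (x + t *\<^sub>R v)) 0"

definition C2_on :: "oct2 set \<Rightarrow> (oct2 \<Rightarrow> real) \<Rightarrow> bool" where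
  "C2_on \<Omega> F \<longleftrightarrow> continuous_on \<Omega> F \<and>
     (\<forall>v\<in>Basis. (\<forall>x\<in>\<Omega>. ((\<lambda>t. F (x + t *\<^sub>R v)) has_real_derivative pd F v x) (at 0))
        \<and> continuous_on \<Omega> (pd F v)
        \<and> (\<forall>w\<in>Basis. (\<forall>x\<in>\<Omega>. ((\<lambda>t. pd F v (x + t *\<^sub>R w)) has_real_derivative pd (pd F v) w x) (at 0))
             \<and> continuous_on \<Omega> (pd (pd F v) w)))"

text \<open>Octonionic Hessian: entry (alpha,beta) is dbar_alpha d_beta u
  = sum_p e_p * (d/dx_{alpha p} sum_q (du/dx_{beta q}) conj(e_q)).\<close>
definition oHess :: "(oct2 \<Rightarrow> real) \<Rightarrow> oct2 \<Rightarrow> nat \<Rightarrow> nat \<Rightarrow> oct" where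
  "oHess u x \<alpha> \<beta> =
     (\<Sum>p\<in>Basis. omul p (\<Sum>q\<in>Basis. pd (pd u (odir \<beta> q)) (odir \<alpha> p) x *\<^sub>R oconj q))"

text \<open>Mixed determinant det(A,B) = 1/2 (a11 b22 + a22 b11 - 2 Re(a12 b21)); the diagonal
  entries of octonionic Hessians of C^2 functions are real, so the products a11 b22, a22 b11
  are real and are read off via their real part.\<close>
definition odet :: "(nat \<Rightarrow> nat \<Rightarrow> oct) \<Rightarrow> (nat \<Rightarrow> nat \<Rightarrow> oct) \<Rightarrow> real" where
  "odet A B = 1/2 * (ore (omul (A 1 1) (B 2 2)) + ore (omul (A 2 2) (B 1 1))
                     - 2 * ore (omul (A 1 2) (B 2 1)))"

definition usc_on :: "'a::metric_space set \<Rightarrow> ('a \<Rightarrow> real) \<Rightarrow> bool" where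
  "usc_on S f \<longleftrightarrow> (\<forall>x\<in>S. \<forall>e>0. \<exists>d>0. \<forall>y\<in>S. dist y x < d \<longrightarrow> f y < f x + e)"

definition subharmonic_on :: "oct set \<Rightarrow> (oct \<Rightarrow> real) \<Rightarrow> bool" where
  "subharmonic_on D f \<longleftrightarrow> usc_on D f \<and>
     (\<forall>x r. 0 < r \<and> cball x r \<subseteq> D \<longrightarrow>
        set_integrable lborel (cball x r) f \<and>
        f x \<le> (LINT y:cball x r|lborel. f y) / measure lborel (cball x r))"

definition OPSH :: "oct2 set \<Rightarrow> (oct2 \<Rightarrow> real) \<Rightarrow> bool" where
  "OPSH \<Omega> u \<longleftrightarrow> usc_on \<Omega> u \<and>
     (\<forall>z0 a. subharmonic_on {x. z0 + (x, omul a x) \<in> \<Omega>} (\<lambda>x. u (z0 + (x, omul a x)))) \<and>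
     (\<forall>z0. subharmonic_on {x. z0 + (0, x) \<in> \<Omega>} (\<lambda>x. u (z0 + (0, x))))"

definition COPSH :: "oct2 set \<Rightarrow> (oct2 \<Rightarrow> real) \<Rightarrow> bool" where
  "COPSH \<Omega> u \<longleftrightarrow> OPSH \<Omega> u \<and> continuous_on \<Omega> u"

text \<open>MA U u v is the mixed octonionic Monge--Ampere measure of the continuous OPSH functions
  u, v on the open set U (a Borel measure on O^2, relevant on U).\<close>
definition is_mixed_oct_MA ::
  "(oct2 set \<Rightarrow> (oct2 \<Rightarrow> real) \<Rightarrow> (oct2 \<Rightarrow> real) \<Rightarrow> oct2 measure) \<Rightarrow> bool" where
  "is_mixed_oct_MA MA \<longleftrightarrow>
    (\<forall>U u v. open U \<and> COPSH U u \<and> COPSH U v \<longrightarrow>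
        sets (MA U u v) = sets borel \<and>
        (\<forall>K. compact K \<and> K \<subseteq> U \<longrightarrow> emeasure (MA U u v) K < \<infinity>)) \<and>
    (\<forall>U u v. open U \<and> COPSH U u \<and> COPSH U v \<and> C2_on U u \<and> C2_on U v \<longrightarrow>
        (\<forall>A\<in>sets borel. A \<subseteq> U \<longrightarrow>
           emeasure (MA U u v) A = (\<integral>\<^sup>+ x\<in>A. ennreal (odet (oHess u x) (oHess v x)) \<partial>lborel))) \<and>
    (\<forall>U W u v u' v'. open U \<and> open W \<and> W \<subseteq> U \<and> COPSH U u \<and> COPSH U v \<and>
        COPSH W u' \<and> COPSH W v' \<and> (\<forall>x\<in>W. u' x = u x \<and> v' x = v x) \<longrightarrow>
        (\<forall>A\<in>sets borel. A \<subseteq> W \<longrightarrow> emeasure (MA W u' v') A = emeasure (MA U u v) A)) \<and>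
    (\<forall>U us vs u v. open U \<and> (\<forall>j. COPSH U (us j) \<and> COPSH U (vs j)) \<and> COPSH U u \<and> COPSH U v \<and>
        (\<forall>K. compact K \<and> K \<subseteq> U \<longrightarrow> uniform_limit K us u sequentially \<and> uniform_limit K vs v sequentially)
        \<longrightarrow> (\<forall>\<phi>::oct2 \<Rightarrow> real. continuous_on UNIV \<phi> \<and> compact (closure {x. \<phi> x \<noteq> 0}) \<and>
                closure {x. \<phi> x \<noteq> 0} \<subseteq> U \<longrightarrow>
              (\<lambda>j. \<integral>x. \<phi> x \<partial>MA U (us j) (vs j)) \<longlonglongrightarrow> (\<integral>x. \<phi> x \<partial>MA U u v)))"

end

theory Submission
  imports Defs
begin

text \<open>The mixed Monge--Ampere operator is weakly continuous and, by its density formula,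
  homogeneous of degree 2 on \<open>C\<^sup>2\<close> functions.  Fix a cutoff \<open>\<phi>\<close> for \<open>K\<close>.  If the integrals
  of \<open>\<phi>\<close> against \<open>MA(u, v)\<close> were unbounded on the class, then, since mollifications of
  \<open>u\<close> and \<open>v\<close> stay in the class and converge locally uniformly, they would be unbounded on
  its \<open>C\<^sup>2\<close> members as well: there are \<open>C\<^sup>2\<close> pairs \<open>(w\<^sub>n, w'\<^sub>n)\<close> with integrals above
  \<open>(n + 1)\<^sup>3\<close>.  Rescaled by \<open>1 / (n + 1)\<close> they converge uniformly to \<open>0\<close> while their
  integrals exceed \<open>n + 1\<close>, contradicting weak continuity.\<close>

section \<open>Homogeneity of the octonionic Hessian\<close>

lemma qmul_scaleR_left: "qmul (c *\<^sub>R x) y = c *\<^sub>R qmul x y"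
  and qmul_scaleR_right: "qmul x (c *\<^sub>R y) = c *\<^sub>R qmul x y"
  and qconj_scaleR: "qconj (c *\<^sub>R x) = c *\<^sub>R qconj x"
  by (simp_all add: qmul_def qconj_def scaleR_conv_of_real algebra_simps)

lemma omul_scaleR_left: "omul (c *\<^sub>R x) y = c *\<^sub>R omul x y"
  and omul_scaleR_right: "omul x (c *\<^sub>R y) = c *\<^sub>R omul x y"
  by (simp_all add: omul_def qmul_scaleR_left qmul_scaleR_right qconj_scaleR algebra_simps)

lemma ore_scaleR: "ore (c *\<^sub>R x) = c * ore x"
  by (simp add: ore_def)

lemma odet_scaleR:
  "odet (\<lambda>\<alpha> \<beta>. c *\<^sub>R A \<alpha> \<beta>) (\<lambda>\<alpha> \<beta>. c *\<^sub>R B \<alpha> \<beta>) = c\<^sup>2 * odet A B"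
  by (simp add: odet_def omul_scaleR_left omul_scaleR_right ore_scaleR power2_eq_square
      algebra_simps)

lemma continuous_on_qmul [continuous_intros]:
  "continuous_on S f \<Longrightarrow> continuous_on S g \<Longrightarrow> continuous_on S (\<lambda>x. qmul (f x) (g x))"
  unfolding qmul_def by (intro continuous_intros)

lemma continuous_on_qconj [continuous_intros]:
  "continuous_on S f \<Longrightarrow> continuous_on S (\<lambda>x. qconj (f x))"
  unfolding qconj_def by (intro continuous_intros)

lemma continuous_on_omul [continuous_intros]:
  "continuous_on S f \<Longrightarrow> continuous_on S g \<Longrightarrow> continuous_on S (\<lambda>x. omul (f x) (g x))"
  unfolding omul_def by (intro continuous_intros)

lemma continuous_on_ore [continuous_intros]:
  "continuous_on S f \<Longrightarrow> continuous_on S (\<lambda>x. ore (f x))"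
  unfolding ore_def by (intro continuous_intros)

lemma odir_in_Basis: "q \<in> Basis \<Longrightarrow> odir \<alpha> q \<in> Basis"
  by (simp add: odir_def Basis_prod_def)

lemma pd_eqI: "((\<lambda>s. F (x + s *\<^sub>R v)) has_real_derivative D) (at 0) \<Longrightarrow> pd F v x = D"
  unfolding pd_def by (rule DERIV_imp_deriv)

lemma eventually_line_in_open:
  fixes x v :: "'a::real_normed_vector"
  assumes "open W" "x \<in> W"
  shows "\<forall>\<^sub>F s in nhds 0. x + s *\<^sub>R v \<in> W"
proof -
  have "open ((\<lambda>s. x + s *\<^sub>R v) -` W)"
    using assms(1) by (intro open_vimage) (auto intro!: continuous_intros)
  then show ?thesis
    using eventually_nhds_in_open[of _ 0] assms(2) by fastforce
qed

lemma pd_cong_open: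
  assumes "open W" "x \<in> W" "\<And>y. y \<in> W \<Longrightarrow> F y = G y"
  shows "pd F v x = pd G v x"
  unfolding pd_def
  by (rule deriv_cong_ev[OF eventually_mono[OF eventually_line_in_open[OF assms(1,2), of v]]])
    (simp_all add: assms(3))

lemma C2_on_pd_cmult:
  assumes "C2_on W u" "x \<in> W" "v \<in> Basis"
  shows "pd (\<lambda>y. c * u y) v x = c * pd u v x"
  using assms by (intro pd_eqI DERIV_cmult) (simp add: C2_on_def)

lemma C2_on_pd_pd_cmult:
  assumes "open W" "C2_on W u" "x \<in> W" "v \<in> Basis" "w \<in> Basis"
  shows "pd (pd (\<lambda>y. c * u y) v) w x = c * pd (pd u v) w x"
proof -
  have "pd (pd (\<lambda>y. c * u y) v) w x = pd (\<lambda>y. c * pd u v y) w x"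
    using assms by (intro pd_cong_open[OF assms(1,3)] C2_on_pd_cmult)
  also have "\<dots> = c * pd (pd u v) w x"
    using assms by (intro pd_eqI DERIV_cmult) (simp add: C2_on_def)
  finally show ?thesis .
qed

lemma C2_on_cmult:
  assumes W: "open W" and u: "C2_on W u"
  shows "C2_on W (\<lambda>y. c * u y)"
  unfolding C2_on_def
proof (intro conjI ballI)
  show "continuous_on W (\<lambda>y. c * u y)"
    using u by (auto simp: C2_on_def intro: continuous_intros)
  fix v :: oct2 assume v: "v \<in> Basis"
  show "continuous_on W (pd (\<lambda>y. c * u y) v)"
    using u v by (subst continuous_on_cong[OF refl C2_on_pd_cmult[OF u _ v]])
      (auto simp: C2_on_def intro: continuous_intros)
  fix x assume x: "x \<in> W"
  show "((\<lambda>t. c * u (x + t *\<^sub>R v)) has_real_derivative pd (\<lambda>y. c * u y) v x) (at 0)"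
    using u x v by (simp add: C2_on_pd_cmult DERIV_cmult C2_on_def)
next
  fix v w :: oct2 assume v: "v \<in> Basis" and w: "w \<in> Basis"
  show "continuous_on W (pd (pd (\<lambda>y. c * u y) v) w)"
    using u v w by (subst continuous_on_cong[OF refl C2_on_pd_pd_cmult[OF W u _ v w]])
      (auto simp: C2_on_def intro: continuous_intros)
  fix x assume x: "x \<in> W"
  have "((\<lambda>t. c * pd u v (x + t *\<^sub>R w)) has_real_derivative c * pd (pd u v) w x) (at 0)"
    using u x v w by (intro DERIV_cmult) (simp add: C2_on_def)
  moreover have "\<forall>\<^sub>F t in nhds 0. pd (\<lambda>y. c * u y) v (x + t *\<^sub>R w) = c * pd u v (x + t *\<^sub>R w)"
    using eventually_line_in_open[OF W x] by eventually_elim (rule C2_on_pd_cmult[OF u _ v])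
  ultimately show "((\<lambda>t. pd (\<lambda>y. c * u y) v (x + t *\<^sub>R w)) has_real_derivative
      pd (pd (\<lambda>y. c * u y) v) w x) (at 0)"
    by (simp add: C2_on_pd_pd_cmult[OF W u x v w] DERIV_cong_ev)
qed

lemma oHess_cmult:
  assumes "open W" "C2_on W u" "x \<in> W"
  shows "oHess (\<lambda>y. c * u y) x \<alpha> \<beta> = c *\<^sub>R oHess u x \<alpha> \<beta>"
  using assms by (simp add: oHess_def C2_on_pd_pd_cmult odir_in_Basis omul_scaleR_right
      flip: scaleR_scaleR scaleR_sum_right)

lemma continuous_on_oHess:
  assumes "C2_on W u"
  shows "continuous_on W (\<lambda>x. oHess u x \<alpha> \<beta>)"
  unfolding oHess_def
  using assms by (intro continuous_intros) (simp add: C2_on_def odir_in_Basis)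

lemma continuous_on_odet_oHess:
  assumes "C2_on W u" "C2_on W v"
  shows "continuous_on W (\<lambda>x. odet (oHess u x) (oHess v x))"
  unfolding odet_def using assms by (intro continuous_intros continuous_on_oHess)

lemma continuous_on_imp_usc_on: "continuous_on S f \<Longrightarrow> usc_on S f"
  unfolding usc_on_def continuous_on_iff dist_real_def by (meson abs_diff_less_iff)

lemma usc_on_subset: "usc_on S f \<Longrightarrow> T \<subseteq> S \<Longrightarrow> usc_on T f"
  unfolding usc_on_def by blast

lemma usc_on_cmult:
  assumes f: "usc_on S f" and c: "0 \<le> c"
  shows "usc_on S (\<lambda>x. c * f x)"
  unfolding usc_on_def
proof (intro ballI allI impI)
  fix x e assume x: "x \<in> S" and e: "(e::real) > 0"
  show "\<exists>d>0. \<forall>y\<in>S. dist y x < d \<longrightarrow> c * f y < c * f x + e"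
  proof (cases "c = 0")
    case False
    then have "e / c > 0"
      using c e by simp
    then obtain d where "d > 0" and d: "\<And>y. y \<in> S \<Longrightarrow> dist y x < d \<Longrightarrow> f y < f x + e / c"
      using f x unfolding usc_on_def by blast
    have "c * f y < c * f x + e" if "y \<in> S" "dist y x < d" for y
      using mult_strict_left_mono[OF d[OF that], of c] c False by (simp add: distrib_left)
    then show ?thesis
      using \<open>d > 0\<close> by blast
  qed (use e in auto)
qed

lemma subharmonic_on_subset: "subharmonic_on D f \<Longrightarrow> D' \<subseteq> D \<Longrightarrow> subharmonic_on D' f"
  unfolding subharmonic_on_def using usc_on_subset by blast

lemma subharmonic_on_cmult:
  assumes f: "subharmonic_on D f" and c: "0 \<le> c"
  shows "subharmonic_on D (\<lambda>x. c * f x)"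
  unfolding subharmonic_on_def
proof (intro conjI allI impI)
  show "usc_on D (\<lambda>x. c * f x)"
    using f c usc_on_cmult subharmonic_on_def by blast
  fix x r assume "0 < r \<and> cball x r \<subseteq> D"
  then have int: "set_integrable lborel (cball x r) f"
    and mean: "f x \<le> (LINT y:cball x r|lborel. f y) / measure lborel (cball x r)"
    using f unfolding subharmonic_on_def by blast+
  show "set_integrable lborel (cball x r) (\<lambda>x. c * f x)"
    using int by (rule set_integrable_mult_right)
  show "c * f x \<le> (LINT y:cball x r|lborel. c * f y) / measure lborel (cball x r)"
    using mult_left_mono[OF mean c] by (simp add: set_integral_mult_right)
qed

lemma COPSH_cmult: "COPSH W f \<Longrightarrow> 0 \<le> c \<Longrightarrow> COPSH W (\<lambda>x. c * f x)"
  unfolding COPSH_def OPSH_def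
  by (simp add: usc_on_cmult subharmonic_on_cmult continuous_on_mult_left)

lemma COPSH_subset:
  assumes "COPSH U f" "W \<subseteq> U"
  shows "COPSH W f"
proof -
  have "{x. z + L x \<in> W} \<subseteq> {x. z + L x \<in> U}" for z and L :: "oct \<Rightarrow> oct2"
    using assms(2) by blast
  then show ?thesis
    using assms unfolding COPSH_def OPSH_def
    by (meson continuous_on_subset subharmonic_on_subset usc_on_subset)
qed

section \<open>Mollification\<close>

lemma has_real_derivative_max0_power:
  assumes n: "1 \<le> n"
  shows "((\<lambda>r::real. (max 0 r) ^ Suc n) has_real_derivative real (Suc n) * (max 0 r) ^ n) (at r)"
proof (cases r "0::real" rule: linorder_cases)
  case less
  have "\<forall>\<^sub>F s in nhds r. (max 0 s) ^ Suc n = 0"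
    using eventually_nhds_in_open[of "{..<0}" r] less by (auto elim: eventually_mono)
  then have "DERIV (\<lambda>s. (max 0 s) ^ Suc n) r :> 0 \<longleftrightarrow> DERIV (\<lambda>_. 0) r :> 0"
    by (rule DERIV_cong_ev[OF refl _ refl])
  then show ?thesis
    using less n by (simp add: power_0_left)
next
  case greater
  have "\<forall>\<^sub>F s in nhds r. (max 0 s) ^ Suc n = s ^ Suc n"
    using eventually_nhds_in_open[of "{0<..}" r] greater by (auto elim: eventually_mono)
  then have "DERIV (\<lambda>s. (max 0 s) ^ Suc n) r :> real (Suc n) * r ^ n \<longleftrightarrow>
      DERIV (\<lambda>s. s ^ Suc n) r :> real (Suc n) * r ^ n"
    by (rule DERIV_cong_ev[OF refl _ refl])
  then show ?thesis
    using greater DERIV_pow[of "Suc n" r] by simp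
next
  case equal
  have "((\<lambda>h::real. (max 0 h) ^ Suc n / h) \<longlongrightarrow> 0) (at 0)"
  proof (rule Lim_null_comparison)
    show "\<forall>\<^sub>F h in at 0. norm ((max 0 h) ^ Suc n / h) \<le> \<bar>h\<bar> ^ n"
      by (intro always_eventually allI) (simp add: max_def power_abs)
    show "((\<lambda>h::real. \<bar>h\<bar> ^ n) \<longlongrightarrow> 0) (at 0)"
      using n by (intro tendsto_eq_intros) auto
  qed
  then show ?thesis
    using equal n by (simp add: DERIV_def power_0_left)
qed

text \<open>The kernel \<open>(e\<^sup>2 - |z|\<^sup>2)\<^sub>+\<^sup>3\<close> is only \<open>C\<^sup>2\<close>, which is all that
  \<^const>\<open>C2_on\<close> asks for.\<close>

definition bump :: "real \<Rightarrow> 'a::euclidean_space \<Rightarrow> real" where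
  "bump e z = (max 0 (e\<^sup>2 - z \<bullet> z)) ^ 3"

definition mollifier :: "real \<Rightarrow> 'a::euclidean_space \<Rightarrow> real" where
  "mollifier e z = bump e z / (\<integral>y. bump e (y::'a) \<partial>lborel)"

definition mollifier_deriv :: "real \<Rightarrow> 'a::euclidean_space \<Rightarrow> 'a \<Rightarrow> real" where
  "mollifier_deriv e v z =
     3 * (max 0 (e\<^sup>2 - z \<bullet> z))\<^sup>2 * (-2 * (z \<bullet> v)) / (\<integral>y. bump e (y::'a) \<partial>lborel)"

definition mollifier_deriv2 :: "real \<Rightarrow> 'a::euclidean_space \<Rightarrow> 'a \<Rightarrow> 'a \<Rightarrow> real" where
  "mollifier_deriv2 e v w z =
     (6 * max 0 (e\<^sup>2 - z \<bullet> z) * (-2 * (z \<bullet> w)) * (-2 * (z \<bullet> v))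
      + 3 * (max 0 (e\<^sup>2 - z \<bullet> z))\<^sup>2 * (-2 * (w \<bullet> v))) / (\<integral>y. bump e (y::'a) \<partial>lborel)"

lemma has_real_derivative_mollifier:
  "((\<lambda>s. mollifier e (z + s *\<^sub>R v)) has_real_derivative mollifier_deriv e v (z + s *\<^sub>R v)) (at s)"
proof -
  have "((\<lambda>s. e\<^sup>2 - (z + s *\<^sub>R v) \<bullet> (z + s *\<^sub>R v)) has_real_derivative -2 * ((z + s *\<^sub>R v) \<bullet> v))
      (at s)"
    by (auto intro!: derivative_eq_intros simp: inner_commute algebra_simps)
  from DERIV_cdivide[OF DERIV_chain'[OF this has_real_derivative_max0_power[of 2]]]
  show ?thesis
    unfolding mollifier_def mollifier_deriv_def bump_def
    by (simp add: numeral_3_eq_3 mult.assoc)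
qed

lemma has_real_derivative_mollifier_deriv:
  "((\<lambda>s. mollifier_deriv e v (z + s *\<^sub>R w)) has_real_derivative mollifier_deriv2 e v w (z + s *\<^sub>R w))
    (at s)"
proof -
  have "((\<lambda>s. e\<^sup>2 - (z + s *\<^sub>R w) \<bullet> (z + s *\<^sub>R w)) has_real_derivative -2 * ((z + s *\<^sub>R w) \<bullet> w))
      (at s)"
    by (auto intro!: derivative_eq_intros simp: inner_commute algebra_simps)
  from DERIV_chain'[OF this has_real_derivative_max0_power[of 1]]
  have sq: "((\<lambda>s. (max 0 (e\<^sup>2 - (z + s *\<^sub>R w) \<bullet> (z + s *\<^sub>R w)))\<^sup>2) has_real_derivative
      2 * max 0 (e\<^sup>2 - (z + s *\<^sub>R w) \<bullet> (z + s *\<^sub>R w)) * (-2 * ((z + s *\<^sub>R w) \<bullet> w))) (at s)"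
    by (simp add: numeral_2_eq_2)
  have lin: "((\<lambda>s. -2 * ((z + s *\<^sub>R w) \<bullet> v)) has_real_derivative -2 * (w \<bullet> v)) (at s)"
    by (auto intro!: derivative_eq_intros simp: inner_commute algebra_simps)
  from DERIV_cdivide[OF DERIV_cmult[OF DERIV_mult[OF sq lin]], of 3 "\<integral>y. bump e y \<partial>lborel"]
  show ?thesis
    unfolding mollifier_deriv_def mollifier_deriv2_def
    by (simp add: algebra_simps)
qed

lemma continuous_on_bump [continuous_intros]:
  "continuous_on S f \<Longrightarrow> continuous_on S (\<lambda>x. bump e (f x))"
  unfolding bump_def by (intro continuous_intros)

lemma continuous_on_mollifier [continuous_intros]:
  "continuous_on S f \<Longrightarrow> continuous_on S (\<lambda>x. mollifier e (f x))"
  unfolding mollifier_def divide_inverse by (intro continuous_intros)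

lemma continuous_on_mollifier_deriv [continuous_intros]:
  "continuous_on S f \<Longrightarrow> continuous_on S (\<lambda>x. mollifier_deriv e v (f x))"
  unfolding mollifier_deriv_def divide_inverse by (intro continuous_intros)

lemma continuous_on_mollifier_deriv2 [continuous_intros]:
  "continuous_on S f \<Longrightarrow> continuous_on S (\<lambda>x. mollifier_deriv2 e v w (f x))"
  unfolding mollifier_deriv2_def divide_inverse by (intro continuous_intros)

lemma
  assumes "0 \<le> e" "e \<le> norm z"
  shows bump_eq_0: "bump e z = 0"
    and mollifier_eq_0: "mollifier e z = 0"
proof -
  have "e\<^sup>2 \<le> z \<bullet> z"
    using assms by (simp add: power_mono flip: power2_norm_eq_inner)
  then show "bump e z = 0" "mollifier e z = 0"
    by (simp_all add: bump_def mollifier_def)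
qed

lemma integrable_lborel_compact_support:
  fixes f :: "'a::euclidean_space \<Rightarrow> real"
  assumes "continuous_on UNIV f" "compact K" "\<And>z. z \<notin> K \<Longrightarrow> f z = 0"
  shows "integrable lborel f"
proof -
  have "integrable lborel (\<lambda>x. indicator K x *\<^sub>R f x)"
    using assms(1,2) by (intro borel_integrable_compact) (auto intro: continuous_on_subset)
  also have "(\<lambda>x. indicator K x *\<^sub>R f x) = f"
    using assms(3) by (auto simp: fun_eq_iff indicator_def)
  finally show ?thesis .
qed

lemma integrable_bump: "0 \<le> e \<Longrightarrow> integrable lborel (bump e :: 'a::euclidean_space \<Rightarrow> real)"
  by (rule integrable_lborel_compact_support[where K="cball 0 e"])
    (auto intro: bump_eq_0 continuous_intros)

lemma integral_bump_pos:
  assumes "0 < e"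
  shows "0 < (\<integral>z. bump e (z::'a::euclidean_space) \<partial>lborel)"
proof -
  define c where "c = (3 * e\<^sup>2 / 4) ^ 3"
  have "indicator (cball 0 (e / 2)) z * c \<le> bump e z" for z :: 'a
  proof (cases "norm z \<le> e / 2")
    case True
    then have "(norm z)\<^sup>2 \<le> (e / 2)\<^sup>2"
      by (simp add: power_mono)
    then have "3 * e\<^sup>2 / 4 \<le> e\<^sup>2 - z \<bullet> z"
      by (simp add: power2_norm_eq_inner power_divide)
    then have "3 * e\<^sup>2 / 4 \<le> max 0 (e\<^sup>2 - z \<bullet> z)"
      by linarith
    then show ?thesis
      using True by (simp add: c_def bump_def power_mono)
  qed (simp add: bump_def)
  then have "(\<integral>z. indicator (cball 0 (e / 2)) (z::'a) * c \<partial>lborel) \<le> (\<integral>z. bump e (z::'a) \<partial>lborel)"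
    using integrable_bump[of e] assms
    by (intro Bochner_Integration.integral_mono integrable_mult_left integrable_real_indicator
        emeasure_compact_finite) auto
  moreover have "(\<integral>z. indicator (cball 0 (e / 2)) (z::'a) * c \<partial>lborel)
      = measure lborel (cball (0::'a) (e / 2)) * c"
    by simp
  moreover have "0 < measure lborel (cball (0::'a) (e / 2)) * c"
    using assms by (simp add: c_def)
  ultimately show ?thesis
    by linarith
qed

lemma mollifier_nonneg: "0 < e \<Longrightarrow> 0 \<le> mollifier e (z::'a::euclidean_space)"
  using integral_bump_pos[of e, where 'a='a] by (simp add: mollifier_def bump_def)

lemma integrable_mollifier: "0 < e \<Longrightarrow> integrable lborel (mollifier e :: 'a::euclidean_space \<Rightarrow> real)"
  unfolding mollifier_def by (simp add: integrable_bump)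

lemma integral_mollifier: "0 < e \<Longrightarrow> (\<integral>z. mollifier e (z::'a::euclidean_space) \<partial>lborel) = 1"
  using integral_bump_pos[of e, where 'a='a] by (simp add: mollifier_def)

text \<open>The integral is taken over a box so that differentiation under the integral sign
  (lemma leibniz_rule_field_derivative) applies; for the mollifier it agrees with the usual
  convolution wherever the box contains the ball of radius \<open>e\<close> around the point.\<close>

definition convolution_on ::
    "'a::euclidean_space set \<Rightarrow> ('a \<Rightarrow> real) \<Rightarrow> ('a \<Rightarrow> real) \<Rightarrow> 'a \<Rightarrow> real"
  where "convolution_on B g k x = integral B (\<lambda>y. g y * k (x - y))"

lemma continuous_on_convolution_on:
  assumes g: "continuous_on UNIV g" and k: "continuous_on UNIV k"
  shows "continuous_on S (convolution_on (cbox a b) g k)"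
proof -
  have "continuous_on (UNIV \<times> cbox a b) (\<lambda>(x, y). g y * k (x - y))"
    unfolding case_prod_beta
    by (intro continuous_intros continuous_on_compose2[OF g _ subset_UNIV]
        continuous_on_compose2[OF k _ subset_UNIV])
  then show ?thesis
    unfolding convolution_on_def
    by (rule continuous_on_subset[OF integral_continuous_on_param]) simp
qed

lemma has_real_derivative_convolution_on:
  assumes g: "continuous_on UNIV g" and k: "continuous_on UNIV k" and k': "continuous_on UNIV k'"
    and deriv: "\<And>z s. ((\<lambda>s. k (z + s *\<^sub>R v)) has_real_derivative k' (z + s *\<^sub>R v)) (at s)"
  shows "((\<lambda>t. convolution_on (cbox a b) g k (x + t *\<^sub>R v)) has_real_derivative
      convolution_on (cbox a b) g k' (x + t *\<^sub>R v)) (at t)"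
proof -
  have "((\<lambda>t. integral (cbox a b) (\<lambda>y. g y * k (x - y + t *\<^sub>R v))) has_real_derivative
      integral (cbox a b) (\<lambda>y. g y * k' (x - y + t *\<^sub>R v))) (at t within UNIV)"
  proof (rule leibniz_rule_field_derivative)
    show "((\<lambda>s. g y * k (x - y + s *\<^sub>R v)) has_real_derivative g y * k' (x - y + s *\<^sub>R v))
        (at s within UNIV)" for s y
      by (intro DERIV_cmult deriv)
    show "(\<lambda>y. g y * k (x - y + s *\<^sub>R v)) integrable_on cbox a b" for s
      by (intro integrable_continuous continuous_intros continuous_on_compose2[OF g _ subset_UNIV]
          continuous_on_compose2[OF k _ subset_UNIV])
    show "continuous_on (UNIV \<times> cbox a b) (\<lambda>(s, y). g y * k' (x - y + s *\<^sub>R v))"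
      unfolding case_prod_beta
      by (intro continuous_intros continuous_on_compose2[OF g _ subset_UNIV]
          continuous_on_compose2[OF k' _ subset_UNIV])
  qed auto
  then show ?thesis
    by (simp add: convolution_on_def algebra_simps)
qed

lemma pd_convolution_on:
  assumes "continuous_on UNIV g" "continuous_on UNIV k" "continuous_on UNIV k'"
    and "\<And>z s. ((\<lambda>s. k (z + s *\<^sub>R v)) has_real_derivative k' (z + s *\<^sub>R v)) (at s)"
  shows "pd (convolution_on (cbox a b) g k) v = convolution_on (cbox a b) g k'"
proof
  fix x
  show "pd (convolution_on (cbox a b) g k) v x = convolution_on (cbox a b) g k' x"
    using has_real_derivative_convolution_on[OF assms, of a b x 0] by (intro pd_eqI) simp
qed

lemma C2_on_convolution_mollifier:
  assumes g: "continuous_on UNIV g"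
  shows "C2_on S (convolution_on (cbox a b) g (mollifier e))"
proof -
  note cont = continuous_on_mollifier[OF continuous_on_id]
    continuous_on_mollifier_deriv[OF continuous_on_id]
    continuous_on_mollifier_deriv2[OF continuous_on_id]
  note pd1 = pd_convolution_on[OF g cont(1,2) has_real_derivative_mollifier]
  note pd2 = pd_convolution_on[OF g cont(2,3) has_real_derivative_mollifier_deriv]
  show ?thesis
    unfolding C2_on_def pd1 pd2
    using has_real_derivative_convolution_on[OF g cont(1,2) has_real_derivative_mollifier,
        where t = 0]
      has_real_derivative_convolution_on[OF g cont(2,3) has_real_derivative_mollifier_deriv,
        where t = 0]
    by (simp add: continuous_on_convolution_on g cont)
qed

lemma integral_lborel_reflect:
  fixes f :: "'a::euclidean_space \<Rightarrow> real"
  assumes "f \<in> borel_measurable borel"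
  shows "(\<integral>y. f y \<partial>lborel) = (\<integral>y. f (x - y) \<partial>lborel)"
proof -
  have "distr lborel borel (\<lambda>y. x + (-1) *\<^sub>R y) = (lborel :: 'a measure)"
    using lborel_affine[of "-1" x] by (simp add: density_1)
  then have "(\<integral>y. f y \<partial>lborel) = (\<integral>y. f y \<partial>distr lborel borel (\<lambda>y. x - y))"
    by simp
  also have "\<dots> = (\<integral>y. f (x - y) \<partial>lborel)"
    using assms by (intro integral_distr) auto
  finally show ?thesis .
qed

lemma integrable_mult_mollifier:
  fixes h :: "'a::euclidean_space \<Rightarrow> real"
  assumes "continuous_on UNIV h" "0 < e"
  shows "integrable lborel (\<lambda>y. h y * mollifier e y)"
  by (intro integrable_lborel_compact_support[where K="cball 0 e"] continuous_intros assms(1))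
    (use assms(2) in \<open>auto simp: mollifier_eq_0\<close>)

lemma convolution_mollifier_eq_integral:
  assumes g: "continuous_on UNIV g" and e: "0 < e" and box: "cball x e \<subseteq> cbox a b"
  shows "convolution_on (cbox a b) g (mollifier e) x = (\<integral>y. g (x - y) * mollifier e y \<partial>lborel)"
proof -
  let ?F = "\<lambda>y. g y * mollifier e (x - y)"
  have cont: "continuous_on UNIV ?F"
    by (intro continuous_intros continuous_on_compose2[OF g _ subset_UNIV])
  have "set_integrable lborel (cbox a b) ?F"
    unfolding set_integrable_def
    by (rule borel_integrable_compact) (auto intro: continuous_on_subset[OF cont])
  then have "convolution_on (cbox a b) g (mollifier e) x = (LINT y:cbox a b|lborel. ?F y)"
    by (simp add: convolution_on_def set_borel_integral_eq_integral)
  also have "\<dots> = (\<integral>y. ?F y \<partial>lborel)"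
    unfolding set_lebesgue_integral_def
  proof (rule Bochner_Integration.integral_cong)
    have "mollifier e (x - y) = 0" if "y \<notin> cbox a b" for y
    proof -
      have "\<not> norm (x - y) \<le> e"
        using box that by (auto simp: subset_iff dist_norm)
      then show ?thesis
        using e by (intro mollifier_eq_0) auto
    qed
    then show "indicator (cbox a b) y *\<^sub>R ?F y = ?F y" for y
      by (cases "y \<in> cbox a b") auto
  qed simp
  also have "\<dots> = (\<integral>y. ?F (x - y) \<partial>lborel)"
    using cont by (intro integral_lborel_reflect borel_measurable_continuous_onI)
  finally show ?thesis
    by simp
qed

lemma abs_integral_mult_mollifier_le:
  fixes h :: "'a::euclidean_space \<Rightarrow> real"
  assumes h: "continuous_on UNIV h" and e: "0 < e" and bound: "\<And>y. norm y < e \<Longrightarrow> \<bar>h y\<bar> \<le> \<eta>"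
  shows "\<bar>\<integral>y. h y * mollifier e y \<partial>lborel\<bar> \<le> \<eta>"
proof -
  have pointwise: "\<bar>h y * mollifier e y\<bar> \<le> \<eta> * mollifier e y" for y
  proof (cases "norm y < e")
    case True
    then show ?thesis
      using bound[OF True] mollifier_nonneg[OF e, of y] by (simp add: abs_mult mult_right_mono)
  qed (use e in \<open>simp add: mollifier_eq_0\<close>)
  have "\<bar>\<integral>y. h y * mollifier e y \<partial>lborel\<bar> \<le> (\<integral>y. \<eta> * mollifier e (y::'a) \<partial>lborel)"
    by (intro integral_abs_bound_integral integrable_mult_mollifier[OF h]
        integrable_mult_right integrable_mollifier) (use e pointwise in auto)
  also have "\<dots> = \<eta>"
    using e by (simp add: integral_mollifier)
  finally show ?thesis .
qed

lemma abs_convolution_mollifier_le: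
  assumes g: "continuous_on UNIV g" and e: "0 < e" and box: "cball x e \<subseteq> cbox a b"
    and M: "\<And>y. \<bar>g y\<bar> \<le> M"
  shows "\<bar>convolution_on (cbox a b) g (mollifier e) x\<bar> \<le> M"
  unfolding convolution_mollifier_eq_integral[OF g e box]
  using M by (intro abs_integral_mult_mollifier_le[OF _ e]
      continuous_on_compose2[OF g _ subset_UNIV] continuous_intros)

lemma abs_convolution_mollifier_diff_le:
  fixes g :: "'a::euclidean_space \<Rightarrow> real"
  assumes g: "continuous_on UNIV g" and e: "0 < e" and box: "cball x e \<subseteq> cbox a b"
    and osc: "\<And>y. norm y < e \<Longrightarrow> \<bar>g (x - y) - g x\<bar> \<le> \<eta>"
  shows "\<bar>convolution_on (cbox a b) g (mollifier e) x - g x\<bar> \<le> \<eta>"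
proof -
  have "convolution_on (cbox a b) g (mollifier e) x - g x
      = (\<integral>y. g (x - y) * mollifier e y \<partial>lborel) - (\<integral>y. g x * mollifier e (y::'a) \<partial>lborel)"
    using e by (simp add: convolution_mollifier_eq_integral[OF g e box] integral_mollifier
        integrable_mollifier)
  also have "\<dots> = (\<integral>y. (g (x - y) - g x) * mollifier e y \<partial>lborel)"
    using e by (subst Bochner_Integration.integral_diff[symmetric])
      (auto simp: left_diff_distrib integrable_mollifier
        intro!: integrable_mult_mollifier continuous_intros
          continuous_on_compose2[OF g _ subset_UNIV])
  finally show ?thesis
    using osc by (simp only:) (intro abs_integral_mult_mollifier_le[OF _ e]
        continuous_on_compose2[OF g _ subset_UNIV] continuous_intros)
qed

lemma uniform_limit_convolution_mollifier:
  assumes g: "continuous_on UNIV g" and \<delta>: "0 < \<delta>" and Q: "compact Q" "Q \<subseteq> cbox a b"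
    and W: "\<And>x. x \<in> W \<Longrightarrow> cball x \<delta> \<subseteq> Q"
  shows "uniform_limit W (\<lambda>k. convolution_on (cbox a b) g (mollifier (\<delta> / (real k + 1)))) g
      sequentially"
proof (rule uniform_limitI)
  fix \<eta> :: real assume "0 < \<eta>"
  have "uniformly_continuous_on Q g"
    using Q by (intro compact_uniformly_continuous continuous_on_subset[OF g]) auto
  then obtain d where "0 < d" and d: "\<And>x x'. x \<in> Q \<Longrightarrow> x' \<in> Q \<Longrightarrow> dist x' x < d \<Longrightarrow>
      dist (g x') (g x) < \<eta> / 2"
    using \<open>0 < \<eta>\<close> by (meson half_gt_zero uniformly_continuous_onE)
  obtain N :: nat where N: "\<delta> / d < real N"
    using reals_Archimedean2 by blast
  have "dist (convolution_on (cbox a b) g (mollifier (\<delta> / (real k + 1))) x) (g x) < \<eta>"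
    if "N \<le> k" "x \<in> W" for k x
  proof -
    define e where "e = \<delta> / (real k + 1)"
    have "0 < e" "e \<le> \<delta>"
      using \<delta> by (auto simp: e_def field_simps)
    have "\<delta> / d < real k + 1"
      using N \<open>N \<le> k\<close> by (smt (verit) of_nat_mono)
    then have "e < d"
      using \<open>0 < d\<close> by (simp add: e_def divide_less_eq mult.commute)
    have box: "cball x e \<subseteq> cbox a b"
      using subset_cball[OF \<open>e \<le> \<delta>\<close>, of x] W[OF \<open>x \<in> W\<close>] Q(2) by blast
    have "\<bar>g (x - y) - g x\<bar> \<le> \<eta> / 2" if "norm y < e" for y
    proof -
      have "x \<in> Q" "x - y \<in> Q"
        using W[OF \<open>x \<in> W\<close>] \<delta> that \<open>e \<le> \<delta>\<close> by (auto simp: dist_norm)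
      then show ?thesis
        using d[of x "x - y"] that \<open>e < d\<close> by (simp add: dist_norm)
    qed
    then have "\<bar>convolution_on (cbox a b) g (mollifier e) x - g x\<bar> \<le> \<eta> / 2"
      by (rule abs_convolution_mollifier_diff_le[OF g \<open>0 < e\<close> box])
    then show ?thesis
      using \<open>0 < \<eta>\<close> by (simp add: e_def dist_real_def)
  qed
  then show "\<forall>\<^sub>F k in sequentially. \<forall>x\<in>W.
      dist (convolution_on (cbox a b) g (mollifier (\<delta> / (real k + 1))) x) (g x) < \<eta>"
    unfolding eventually_sequentially by blast
qed

lemma set_integral_convolution_mollifier:
  fixes L :: "'b::euclidean_space \<Rightarrow> 'a::euclidean_space" and g :: "'a \<Rightarrow> real"
  assumes g: "continuous_on UNIV g" and e: "0 < e" and L: "continuous_on UNIV L"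
    and A: "compact A" and box: "\<And>x. x \<in> A \<Longrightarrow> cball (z + L x) e \<subseteq> cbox a b"
  shows "integrable lborel (\<lambda>y. (LINT x:A|lborel. g (z - y + L x)) * mollifier e y)"
    and "(LINT x:A|lborel. convolution_on (cbox a b) g (mollifier e) (z + L x))
      = (\<integral>y. (LINT x:A|lborel. g (z - y + L x)) * mollifier e y \<partial>lborel)"
proof -
  define H where "H x y = indicator A x * (g (z - y + L x) * mollifier e y)" for x y
  have H_swap: "(\<lambda>y. \<integral>x. H x y \<partial>lborel) = (\<lambda>y. (LINT x:A|lborel. g (z - y + L x)) * mollifier e y)"
    by (simp add: H_def set_lebesgue_integral_def integral_mult_left_zero flip: mult.assoc)
  have cont: "continuous_on UNIV (\<lambda>p. g (z - snd p + L (fst p)) * mollifier e (snd p))"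
    by (intro continuous_intros continuous_on_compose2[OF g _ subset_UNIV]
        continuous_on_compose2[OF L _ subset_UNIV])
  have "integrable lborel (\<lambda>p::'b \<times> 'a. indicator (A \<times> cball 0 e) p *\<^sub>R
      (g (z - snd p + L (fst p)) * mollifier e (snd p)))"
    using A by (intro borel_integrable_compact compact_Times continuous_on_subset[OF cont]) auto
  also have "(\<lambda>p::'b \<times> 'a. indicator (A \<times> cball 0 e) p *\<^sub>R
      (g (z - snd p + L (fst p)) * mollifier e (snd p))) = case_prod H"
    using e by (auto simp: fun_eq_iff H_def indicator_def mollifier_eq_0)
  finally have int: "integrable (lborel \<Otimes>\<^sub>M lborel) (case_prod H)"
    by (simp add: lborel_prod)
  from lborel_pair.integrable_snd[OF int]
  show "integrable lborel (\<lambda>y. (LINT x:A|lborel. g (z - y + L x)) * mollifier e y)"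
    by (simp add: H_swap)
  have "(LINT x:A|lborel. convolution_on (cbox a b) g (mollifier e) (z + L x))
      = (\<integral>x. (\<integral>y. H x y \<partial>lborel) \<partial>lborel)"
    unfolding set_lebesgue_integral_def
  proof (rule Bochner_Integration.integral_cong)
    show "indicator A x *\<^sub>R convolution_on (cbox a b) g (mollifier e) (z + L x)
        = (\<integral>y. H x y \<partial>lborel)" for x
      using convolution_mollifier_eq_integral[OF g e box, of x]
      by (cases "x \<in> A") (simp_all add: H_def algebra_simps)
  qed simp
  also have "\<dots> = (\<integral>y. (\<integral>x. H x y \<partial>lborel) \<partial>lborel)"
    by (rule lborel_pair.Fubini_integral[OF int, symmetric])
  finally show "(LINT x:A|lborel. convolution_on (cbox a b) g (mollifier e) (z + L x))
      = (\<integral>y. (LINT x:A|lborel. g (z - y + L x)) * mollifier e y \<partial>lborel)"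
    by (simp add: H_swap)
qed

text \<open>A mollification is an average of translates of \<open>g\<close>; Fubini exchanges this average
  with the mean over the ball.\<close>

lemma convolution_mollifier_sub_mean_value:
  fixes L :: "'b::euclidean_space \<Rightarrow> 'a::euclidean_space" and g :: "'a \<Rightarrow> real"
  assumes g: "continuous_on UNIV g" and e: "0 < e" and L: "continuous_on UNIV L" and r: "0 < r"
    and box: "\<And>x. x \<in> cball x0 r \<Longrightarrow> cball (z + L x) e \<subseteq> cbox a b"
    and mean: "\<And>y. norm y < e \<Longrightarrow>
      g (z - y + L x0) \<le> (LINT x:cball x0 r|lborel. g (z - y + L x)) / measure lborel (cball x0 r)"
  shows "convolution_on (cbox a b) g (mollifier e) (z + L x0)
    \<le> (LINT x:cball x0 r|lborel. convolution_on (cbox a b) g (mollifier e) (z + L x))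
        / measure lborel (cball x0 r)"
proof -
  define V where "V = measure lborel (cball x0 r)"
  note fubini = set_integral_convolution_mollifier[OF g e L compact_cball box]
  have "g (z - y + L x0) * mollifier e y
      \<le> (LINT x:cball x0 r|lborel. g (z - y + L x)) * mollifier e y / V" for y
  proof (cases "norm y < e")
    case True
    then show ?thesis
      using mult_right_mono[OF mean[OF True] mollifier_nonneg[OF e, of y]] by (simp add: V_def)
  qed (use e in \<open>simp add: mollifier_eq_0\<close>)
  then have "(\<integral>y. g (z - y + L x0) * mollifier e y \<partial>lborel)
      \<le> (\<integral>y. (LINT x:cball x0 r|lborel. g (z - y + L x)) * mollifier e y / V \<partial>lborel)"
    using e
    by (intro Bochner_Integration.integral_mono integrable_divide fubini(1)
        integrable_mult_mollifier continuous_intros continuous_on_compose2[OF g _ subset_UNIV]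
        continuous_on_compose2[OF L _ subset_UNIV])
  also have "\<dots> = (\<integral>y. (LINT x:cball x0 r|lborel. g (z - y + L x)) * mollifier e y \<partial>lborel) / V"
    by (rule integral_divide_zero)
  also have "\<dots>
      = (LINT x:cball x0 r|lborel. convolution_on (cbox a b) g (mollifier e) (z + L x)) / V"
    using fubini(2) by (simp only:)
  finally show ?thesis
    using convolution_mollifier_eq_integral[OF g e box, of x0] r by (simp add: V_def algebra_simps)
qed

lemma subharmonic_on_convolution_mollifier_line:
  fixes L :: "oct \<Rightarrow> oct2"
  assumes g: "continuous_on UNIV g" and e: "0 < e" and L: "continuous_on UNIV L"
    and box: "\<And>x. x \<in> W \<Longrightarrow> cball x e \<subseteq> cbox a b"
    and gu: "\<And>x y. x \<in> W \<Longrightarrow> dist x y \<le> e \<Longrightarrow> y \<in> \<Omega> \<and> g y = u y"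
    and u: "\<And>p. subharmonic_on {x. p + L x \<in> \<Omega>} (\<lambda>x. u (p + L x))"
  shows "subharmonic_on {x. z + L x \<in> W} (\<lambda>x. convolution_on (cbox a b) g (mollifier e) (z + L x))"
  unfolding subharmonic_on_def
proof (intro conjI allI impI)
  have cont: "continuous_on UNIV (\<lambda>x. convolution_on (cbox a b) g (mollifier e) (z + L x))"
    by (intro continuous_on_compose2[OF continuous_on_convolution_on[OF g] _ subset_UNIV]
        continuous_intros L)
  then show "usc_on {x. z + L x \<in> W} (\<lambda>x. convolution_on (cbox a b) g (mollifier e) (z + L x))"
    by (intro continuous_on_imp_usc_on continuous_on_subset[OF cont]) simp
  fix x0 r assume x0r: "0 < r \<and> cball x0 r \<subseteq> {x. z + L x \<in> W}"
  show "set_integrable lborel (cball x0 r)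
      (\<lambda>x. convolution_on (cbox a b) g (mollifier e) (z + L x))"
    unfolding set_integrable_def
    by (intro borel_integrable_compact continuous_on_subset[OF cont]) auto
  show "convolution_on (cbox a b) g (mollifier e) (z + L x0)
    \<le> (LINT x:cball x0 r|lborel. convolution_on (cbox a b) g (mollifier e) (z + L x))
        / measure lborel (cball x0 r)"
  proof (rule convolution_mollifier_sub_mean_value[OF g e L])
    fix y :: oct2 assume "norm y < e"
    have gu_line: "z - y + L x \<in> \<Omega> \<and> g (z - y + L x) = u (z - y + L x)" if "x \<in> cball x0 r" for x
    proof (rule gu)
      show "z + L x \<in> W"
        using x0r that by blast
      show "dist (z + L x) (z - y + L x) \<le> e"
        using \<open>norm y < e\<close> by (simp add: dist_norm)
    qed
    then have "cball x0 r \<subseteq> {x. z - y + L x \<in> \<Omega>}"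
      by blast
    then have "u (z - y + L x0)
        \<le> (LINT x:cball x0 r|lborel. u (z - y + L x)) / measure lborel (cball x0 r)"
      using u[of "z - y", unfolded subharmonic_on_def] x0r by blast
    moreover have "(LINT x:cball x0 r|lborel. u (z - y + L x))
        = (LINT x:cball x0 r|lborel. g (z - y + L x))"
      using gu_line by (intro set_lebesgue_integral_cong) auto
    ultimately show "g (z - y + L x0)
        \<le> (LINT x:cball x0 r|lborel. g (z - y + L x)) / measure lborel (cball x0 r)"
      using gu_line[of x0] x0r by simp
  next
    show "cball (z + L x) e \<subseteq> cbox a b" if "x \<in> cball x0 r" for x
      using box x0r that by blast
  qed (use x0r in simp)
qed

lemma COPSH_convolution_mollifier:
  assumes g: "continuous_on UNIV g" and e: "0 < e"
    and box: "\<And>x. x \<in> W \<Longrightarrow> cball x e \<subseteq> cbox a b"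
    and gu: "\<And>x y. x \<in> W \<Longrightarrow> dist x y \<le> e \<Longrightarrow> y \<in> \<Omega> \<and> g y = u y"
    and u: "COPSH \<Omega> u"
  shows "COPSH W (convolution_on (cbox a b) g (mollifier e))"
proof -
  have cont: "continuous_on W (convolution_on (cbox a b) g (mollifier e))"
    by (intro continuous_on_convolution_on g continuous_intros)
  have line: "subharmonic_on {x. p + (x, omul c x) \<in> \<Omega>} (\<lambda>x. u (p + (x, omul c x)))"
    and vertical_line: "subharmonic_on {x. p + (0, x) \<in> \<Omega>} (\<lambda>x. u (p + (0, x)))" for p c
    using u unfolding COPSH_def OPSH_def by blast+
  have "subharmonic_on {x. z + (x, omul c x) \<in> W}
      (\<lambda>x. convolution_on (cbox a b) g (mollifier e) (z + (x, omul c x)))" for z c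
    by (intro subharmonic_on_convolution_mollifier_line[OF g e _ box gu] continuous_intros line)
  moreover have "subharmonic_on {x. z + (0, x) \<in> W}
      (\<lambda>x. convolution_on (cbox a b) g (mollifier e) (z + (0, x)))" for z
    by (intro subharmonic_on_convolution_mollifier_line[OF g e _ box gu] continuous_intros
        vertical_line)
  ultimately show ?thesis
    unfolding COPSH_def OPSH_def using cont continuous_on_imp_usc_on[OF cont] by blast
qed

section \<open>Approximation and cutoff functions\<close>

definition C2_COPSH_bounded :: "oct2 set \<Rightarrow> real \<Rightarrow> (oct2 \<Rightarrow> real) \<Rightarrow> bool" where
  "C2_COPSH_bounded W M w \<longleftrightarrow> COPSH W w \<and> C2_on W w \<and> (\<forall>x\<in>W. \<bar>w x\<bar> \<le> M)"

lemma C2_COPSH_approximation: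
  assumes u: "COPSH \<Omega> u" and bound: "\<And>x. x \<in> \<Omega> \<Longrightarrow> \<bar>u x\<bar> \<le> M" and M: "0 \<le> M"
    and Q: "compact Q" "Q \<subseteq> \<Omega>" and \<delta>: "0 < \<delta>" and margin: "\<And>x. x \<in> W \<Longrightarrow> cball x \<delta> \<subseteq> Q"
  obtains w where "\<And>k. C2_COPSH_bounded W M (w k)" "uniform_limit W w u sequentially"
proof -
  obtain g where g: "continuous_on UNIV g" "\<And>y. y \<in> Q \<Longrightarrow> g y = u y" "\<And>y. \<bar>g y\<bar> \<le> M"
  proof (rule Tietze[of Q u UNIV M])
    show "continuous_on Q u"
      using u Q(2) unfolding COPSH_def by (blast intro: continuous_on_subset)
    show "closedin (top_of_set UNIV) Q"
      using Q(1) by (simp add: compact_imp_closed)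
  qed (use M bound Q(2) in auto)
  obtain c where box: "Q \<subseteq> cbox (-c) c"
    using bounded_subset_cbox_symmetric[OF compact_imp_bounded[OF Q(1)]] .
  define e where "e k = \<delta> / (real k + 1)" for k :: nat
  have e: "0 < e k" "e k \<le> \<delta>" for k
    using \<delta> by (auto simp: e_def field_simps)
  have ball_Q: "cball x (e k) \<subseteq> Q" if "x \<in> W" for x k
    using subset_cball[OF e(2)] margin[OF that] by blast
  have ball_box: "cball x (e k) \<subseteq> cbox (-c) c" if "x \<in> W" for x k
    using ball_Q[OF that] box by (rule subset_trans)
  have gu: "y \<in> \<Omega> \<and> g y = u y" if "x \<in> W" "dist x y \<le> e k" for x y k
  proof -
    have "y \<in> Q"
      using ball_Q[OF that(1), of k] that(2) by (meson mem_cball subsetD)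
    then show ?thesis
      using Q(2) g(2) by blast
  qed
  have gW: "g x = u x" if "x \<in> W" for x
    using margin[OF that] \<delta> g(2) by (meson centre_in_cball less_imp_le subsetD)
  show thesis
  proof
    let ?w = "\<lambda>k. convolution_on (cbox (-c) c) g (mollifier (e k))"
    show "C2_COPSH_bounded W M (?w k)" for k
      unfolding C2_COPSH_bounded_def
      by (intro conjI ballI COPSH_convolution_mollifier[OF g(1) e(1) ball_box gu u]
          C2_on_convolution_mollifier[OF g(1)]
          abs_convolution_mollifier_le[OF g(1) e(1) ball_box g(3)])
    have "uniform_limit W ?w g sequentially"
      unfolding e_def by (rule uniform_limit_convolution_mollifier[OF g(1) \<delta> Q(1) box margin])
    then show "uniform_limit W ?w u sequentially"
      using uniform_limit_cong'[of W ?w ?w g u sequentially] gW by blast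
  qed
qed

definition test_function :: "'a::metric_space set \<Rightarrow> ('a \<Rightarrow> real) \<Rightarrow> bool" where
  "test_function U \<phi> \<longleftrightarrow>
     continuous_on UNIV \<phi> \<and> compact (closure {x. \<phi> x \<noteq> 0}) \<and> closure {x. \<phi> x \<noteq> 0} \<subseteq> U"

lemma test_function_support: "test_function U \<phi> \<Longrightarrow> \<phi> x \<noteq> 0 \<Longrightarrow> x \<in> U"
  unfolding test_function_def by (meson closure_subset mem_Collect_eq subsetD)

lemma cutoff_function:
  fixes K :: "'a::euclidean_space set"
  assumes K: "compact K" and W: "open W" "K \<subseteq> W"
  obtains \<phi> where "test_function W \<phi>" "\<And>x. 0 \<le> \<phi> x" "\<And>x. \<phi> x \<le> 1" "\<And>x. x \<in> K \<Longrightarrow> \<phi> x = 1"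
proof (cases "K = {}")
  case True
  then show thesis
    by (intro that[of "\<lambda>_. 0"]) (auto simp: test_function_def)
next
  case False
  obtain \<epsilon> where "0 < \<epsilon>" and \<epsilon>: "(\<Union>x\<in>K. ball x \<epsilon>) \<subseteq> W"
    using compact_subset_open_imp_ball_epsilon_subset[OF K W] .
  define \<phi> where "\<phi> x = max 0 (1 - 2 * infdist x K / \<epsilon>)" for x
  define N where "N = {x. infdist x K \<le> \<epsilon> / 2}"
  have "\<phi> x = 0" if "\<epsilon> / 2 < infdist x K" for x
    using that \<open>0 < \<epsilon>\<close> by (simp add: \<phi>_def field_simps)
  then have nz: "{x. \<phi> x \<noteq> 0} \<subseteq> N"
    by (force simp: N_def)
  moreover have "compact N"
    unfolding N_def using False K \<open>0 < \<epsilon>\<close> by (intro compact_infdist_le) auto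
  ultimately have supp: "closure {x. \<phi> x \<noteq> 0} \<subseteq> N"
    by (simp add: closure_minimal compact_imp_closed)
  have "N \<subseteq> W"
  proof
    fix x assume "x \<in> N"
    obtain y where "y \<in> K" "infdist x K = dist x y"
      using infdist_attains_inf[OF compact_imp_closed[OF K] False] by blast
    then show "x \<in> W"
      using \<open>x \<in> N\<close> \<open>0 < \<epsilon>\<close> \<epsilon> by (force simp: N_def dist_commute)
  qed
  have "compact (closure {x. \<phi> x \<noteq> 0})"
    using bounded_subset[OF compact_imp_bounded[OF \<open>compact N\<close>] nz] by (simp add: compact_closure)
  moreover have "continuous_on UNIV \<phi>"
    unfolding \<phi>_def[abs_def] using \<open>0 < \<epsilon>\<close> by (intro continuous_intros) auto
  ultimately have "test_function W \<phi>"
    unfolding test_function_def using supp \<open>N \<subseteq> W\<close> by blast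
  then show thesis
    by (rule that) (use \<open>0 < \<epsilon>\<close> in \<open>auto simp: \<phi>_def infdist_nonneg\<close>)
qed

lemma compact_margin:
  fixes K :: "'a::euclidean_space set"
  assumes K: "compact K" and \<Omega>: "open \<Omega>" "K \<subseteq> \<Omega>"
  obtains W Q \<delta> where "open W" "K \<subseteq> W" "W \<subseteq> \<Omega>" "compact Q" "Q \<subseteq> \<Omega>" "0 < \<delta>"
    "\<And>x. x \<in> W \<Longrightarrow> cball x \<delta> \<subseteq> Q"
proof -
  obtain \<epsilon> where "0 < \<epsilon>" and \<epsilon>: "(\<Union>x\<in>K. ball x \<epsilon>) \<subseteq> \<Omega>"
    using compact_subset_open_imp_ball_epsilon_subset[OF K \<Omega>] .
  define \<delta> where "\<delta> = \<epsilon> / 3"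
  define Q where "Q = (\<lambda>(x, y). x + y) ` (K \<times> cball 0 (2 * \<delta>))"
  show thesis
  proof (rule that[of "\<Union>x\<in>K. ball x \<delta>" Q \<delta>])
    show "open (\<Union>x\<in>K. ball x \<delta>)" "K \<subseteq> (\<Union>x\<in>K. ball x \<delta>)" "0 < \<delta>"
      using \<open>0 < \<epsilon>\<close> by (auto simp: \<delta>_def)
    show "(\<Union>x\<in>K. ball x \<delta>) \<subseteq> \<Omega>"
      using \<epsilon> \<open>0 < \<epsilon>\<close> by (force simp: \<delta>_def)
    show "compact Q"
      unfolding Q_def case_prod_beta using K
      by (intro compact_continuous_image compact_Times compact_cball continuous_intros)
    show "Q \<subseteq> \<Omega>"
      using \<epsilon> \<open>0 < \<epsilon>\<close> by (force simp: Q_def \<delta>_def dist_norm)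
    show "cball z \<delta> \<subseteq> Q" if z: "z \<in> (\<Union>x\<in>K. ball x \<delta>)" for z
    proof
      fix y assume "y \<in> cball z \<delta>"
      obtain x where "x \<in> K" "dist x z < \<delta>"
        using z by auto
      then have "y - x \<in> cball 0 (2 * \<delta>)"
        using \<open>y \<in> cball z \<delta>\<close> dist_triangle[of x y z] by (auto simp: dist_norm norm_minus_commute)
      then show "y \<in> Q"
        using \<open>x \<in> K\<close> unfolding Q_def by (auto intro!: image_eqI[of _ _ "(x, y - x)"])
    qed
  qed
qed

section \<open>The mixed Monge--Ampere measure\<close>

lemma nn_integral_density_on_open:
  fixes \<mu> :: "'a::euclidean_space measure" and f \<phi> :: "'a \<Rightarrow> real"
  assumes sets: "sets \<mu> = sets borel" and W: "open W" and f: "continuous_on W f"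
    and dens: "\<And>A. A \<in> sets borel \<Longrightarrow> A \<subseteq> W \<Longrightarrow> emeasure \<mu> A = (\<integral>\<^sup>+x\<in>A. ennreal (f x) \<partial>lborel)"
    and \<phi>: "\<phi> \<in> borel_measurable borel" "\<And>x. 0 \<le> \<phi> x" "\<And>x. \<phi> x \<noteq> 0 \<Longrightarrow> x \<in> W"
  shows "(\<integral>\<^sup>+x. ennreal (\<phi> x) \<partial>\<mu>) = (\<integral>\<^sup>+x. ennreal (indicator W x * \<phi> x * f x) \<partial>lborel)"
proof -
  have Wb: "W \<in> sets borel"
    using W by simp
  have "(\<lambda>x. ennreal (indicator W x *\<^sub>R f x)) \<in> borel_measurable borel"
    using borel_measurable_continuous_on_indicator[OF Wb f] by measurable
  moreover have "(\<lambda>x. ennreal (indicator W x *\<^sub>R f x)) = (\<lambda>x. indicator W x * ennreal (f x))"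
    by (auto simp: fun_eq_iff indicator_def)
  ultimately have fW: "(\<lambda>x. indicator W x * ennreal (f x)) \<in> borel_measurable borel"
    by simp
  have "density \<mu> (indicator W) = density lborel (\<lambda>x. indicator W x * ennreal (f x))"
  proof (rule measure_eqI)
    fix A assume "A \<in> sets (density \<mu> (indicator W))"
    then have A: "A \<in> sets borel"
      using sets by simp
    have "emeasure (density \<mu> (indicator W)) A = emeasure \<mu> (W \<inter> A)"
      using sets Wb A by (intro emeasure_restricted) auto
    also have "\<dots> = (\<integral>\<^sup>+x. indicator W x * ennreal (f x) * indicator A x \<partial>lborel)"
      using Wb A by (subst dens) (auto intro!: nn_integral_cong simp: indicator_def)
    also have "\<dots> = emeasure (density lborel (\<lambda>x. indicator W x * ennreal (f x))) A"
      using fW A by (simp add: emeasure_density)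
    finally show "emeasure (density \<mu> (indicator W)) A
        = emeasure (density lborel (\<lambda>x. indicator W x * ennreal (f x))) A" .
  qed (simp add: sets)
  have "(\<integral>\<^sup>+x. ennreal (\<phi> x) \<partial>\<mu>) = (\<integral>\<^sup>+x. indicator W x * ennreal (\<phi> x) \<partial>\<mu>)"
    using \<phi>(3)
    by (intro nn_integral_cong) (metis indicator_simps(1) mult_1 mult_zero_right ennreal_0)
  also have "\<dots> = (\<integral>\<^sup>+x. ennreal (\<phi> x) \<partial>density \<mu> (indicator W))"
    using sets Wb \<phi>(1)
    by (subst nn_integral_density) (auto simp: measurable_cong_sets[OF sets refl])
  also have "\<dots> = (\<integral>\<^sup>+x. indicator W x * ennreal (f x) * ennreal (\<phi> x) \<partial>lborel)"
    unfolding \<open>density \<mu> (indicator W) = _\<close> using fW \<phi>(1) by (subst nn_integral_density) auto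
  also have "\<dots> = (\<integral>\<^sup>+x. ennreal (indicator W x * \<phi> x * f x) \<partial>lborel)"
    using \<phi>(2) by (intro nn_integral_cong) (simp add: indicator_def ennreal_mult' mult.commute)
  finally show ?thesis .
qed

lemma uniform_limit_mult_null_bounded:
  fixes f :: "nat \<Rightarrow> 'a \<Rightarrow> real"
  assumes c: "c \<longlonglongrightarrow> 0" and f: "\<And>n x. x \<in> S \<Longrightarrow> \<bar>f n x\<bar> \<le> M"
  shows "uniform_limit S (\<lambda>n x. c n * f n x) (\<lambda>_. 0) sequentially"
proof (rule uniform_limit_null_comparison)
  show "\<forall>\<^sub>F n in sequentially. \<forall>x\<in>S. norm (c n * f n x) \<le> \<bar>c n\<bar> * M"
    using f by (simp add: abs_mult mult_left_mono)
  have "(\<lambda>n. \<bar>c n\<bar> * M) \<longlonglongrightarrow> 0"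
    using tendsto_mult_left_zero[OF tendsto_rabs_zero[OF c]] .
  then show "uniform_limit S (\<lambda>n x. \<bar>c n\<bar> * M) (\<lambda>_. 0) sequentially"
    by (simp add: uniform_limit_iff tendsto_iff)
qed

context
  fixes MA :: "oct2 set \<Rightarrow> (oct2 \<Rightarrow> real) \<Rightarrow> (oct2 \<Rightarrow> real) \<Rightarrow> oct2 measure"
  assumes MA: "is_mixed_oct_MA MA"
begin

lemma sets_MA: "open U \<Longrightarrow> COPSH U u \<Longrightarrow> COPSH U v \<Longrightarrow> sets (MA U u v) = sets borel"
  using conjunct1[OF MA[unfolded is_mixed_oct_MA_def]] by blast

lemma emeasure_MA_compact_finite:
  "open U \<Longrightarrow> COPSH U u \<Longrightarrow> COPSH U v \<Longrightarrow> compact K \<Longrightarrow> K \<subseteq> U \<Longrightarrow> emeasure (MA U u v) K < \<infinity>"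
  using conjunct1[OF MA[unfolded is_mixed_oct_MA_def]] by blast

lemma emeasure_MA_C2:
  "open U \<Longrightarrow> COPSH U u \<Longrightarrow> COPSH U v \<Longrightarrow> C2_on U u \<Longrightarrow> C2_on U v \<Longrightarrow> A \<in> sets borel \<Longrightarrow>
    A \<subseteq> U \<Longrightarrow> emeasure (MA U u v) A = (\<integral>\<^sup>+x\<in>A. ennreal (odet (oHess u x) (oHess v x)) \<partial>lborel)"
  using conjunct1[OF conjunct2[OF MA[unfolded is_mixed_oct_MA_def]]] by blast

lemma emeasure_MA_restrict:
  assumes "open U" "open W" "W \<subseteq> U" "COPSH U u" "COPSH U v" "A \<in> sets borel" "A \<subseteq> W"
  shows "emeasure (MA W u v) A = emeasure (MA U u v) A"
proof -
  have "COPSH W u" "COPSH W v"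
    using assms(3-5) COPSH_subset by blast+
  then show ?thesis
    using conjunct1[OF conjunct2[OF conjunct2[OF MA[unfolded is_mixed_oct_MA_def]]], rule_format,
        of U W u v u v] assms by blast
qed

lemma integral_MA_tendsto:
  assumes "open U" "\<And>j. COPSH U (us j)" "\<And>j. COPSH U (vs j)" "COPSH U u" "COPSH U v"
    and "uniform_limit U us u sequentially" "uniform_limit U vs v sequentially"
    and "test_function U \<phi>"
  shows "(\<lambda>j. \<integral>x. \<phi> x \<partial>MA U (us j) (vs j)) \<longlonglongrightarrow> (\<integral>x. \<phi> x \<partial>MA U u v)"
proof -
  have "\<forall>K. compact K \<and> K \<subseteq> U \<longrightarrow>
      uniform_limit K us u sequentially \<and> uniform_limit K vs v sequentially"
    using assms(6,7) uniform_limit_on_subset by blast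
  then show ?thesis
    using conjunct2[OF conjunct2[OF conjunct2[OF MA[unfolded is_mixed_oct_MA_def]]], rule_format,
        of U us vs u v \<phi>] assms unfolding test_function_def by blast
qed

lemma integral_MA_C2:
  assumes W: "open W" and uv: "COPSH W u" "COPSH W v" "C2_on W u" "C2_on W v"
    and \<phi>: "test_function W \<phi>" "\<And>x. 0 \<le> \<phi> x"
  shows "(\<integral>x. \<phi> x \<partial>MA W u v)
    = enn2real (\<integral>\<^sup>+x. ennreal (indicator W x * \<phi> x * odet (oHess u x) (oHess v x)) \<partial>lborel)"
proof -
  have sets: "sets (MA W u v) = sets borel"
    by (rule sets_MA[OF W uv(1,2)])
  have \<phi>m: "\<phi> \<in> borel_measurable borel"
    using \<phi>(1) by (simp add: test_function_def borel_measurable_continuous_onI)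
  have "(\<integral>x. \<phi> x \<partial>MA W u v) = enn2real (\<integral>\<^sup>+x. ennreal (\<phi> x) \<partial>MA W u v)"
    using \<phi>m \<phi>(2) sets
    by (intro integral_eq_nn_integral) (auto simp: measurable_cong_sets[OF sets refl])
  also have "(\<integral>\<^sup>+x. ennreal (\<phi> x) \<partial>MA W u v)
      = (\<integral>\<^sup>+x. ennreal (indicator W x * \<phi> x * odet (oHess u x) (oHess v x)) \<partial>lborel)"
    using test_function_support[OF \<phi>(1)] \<phi>m \<phi>(2)
    by (intro nn_integral_density_on_open[OF sets W continuous_on_odet_oHess[OF uv(3,4)]]
        emeasure_MA_C2[OF W uv])
  finally show ?thesis .
qed

lemma integral_MA_cmult_C2:
  assumes W: "open W" and uv: "COPSH W u" "COPSH W v" "C2_on W u" "C2_on W v"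
    and \<phi>: "test_function W \<phi>" "\<And>x. 0 \<le> \<phi> x" and c: "0 \<le> c"
  shows "(\<integral>x. \<phi> x \<partial>MA W (\<lambda>x. c * u x) (\<lambda>x. c * v x)) = c\<^sup>2 * (\<integral>x. \<phi> x \<partial>MA W u v)"
proof -
  let ?f = "\<lambda>x. indicator W x * \<phi> x * odet (oHess u x) (oHess v x)"
  have "indicator W x * \<phi> x * odet (oHess (\<lambda>y. c * u y) x) (oHess (\<lambda>y. c * v y) x) = c\<^sup>2 * ?f x"
    for x
  proof (cases "x \<in> W")
    case True
    have "oHess (\<lambda>y. c * u y) x = (\<lambda>\<alpha> \<beta>. c *\<^sub>R oHess u x \<alpha> \<beta>)"
      by (intro ext oHess_cmult[OF W uv(3) True])
    moreover have "oHess (\<lambda>y. c * v y) x = (\<lambda>\<alpha> \<beta>. c *\<^sub>R oHess v x \<alpha> \<beta>)"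
      by (intro ext oHess_cmult[OF W uv(4) True])
    ultimately show ?thesis
      by (simp add: odet_scaleR)
  qed simp
  note pointwise = this
  have "(\<integral>x. \<phi> x \<partial>MA W (\<lambda>x. c * u x) (\<lambda>x. c * v x)) = enn2real (\<integral>\<^sup>+x. ennreal
      (indicator W x * \<phi> x * odet (oHess (\<lambda>y. c * u y) x) (oHess (\<lambda>y. c * v y) x)) \<partial>lborel)"
    using uv c by (intro integral_MA_C2[OF W _ _ _ _ \<phi>] COPSH_cmult C2_on_cmult[OF W])
  also have "\<dots> = enn2real (\<integral>\<^sup>+x. ennreal (c\<^sup>2 * ?f x) \<partial>lborel)"
    by (simp only: pointwise)
  also have "\<dots> = enn2real (ennreal (c\<^sup>2) * (\<integral>\<^sup>+x. ennreal (?f x) \<partial>lborel))"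
  proof -
    have "(\<lambda>x. indicator W x *\<^sub>R (\<phi> x * odet (oHess u x) (oHess v x))) \<in> borel_measurable borel"
      using W \<phi>(1) unfolding test_function_def
      by (intro borel_measurable_continuous_on_indicator continuous_intros
          continuous_on_odet_oHess uv)
        (auto intro: continuous_on_subset)
    then have "(\<lambda>x. ennreal (?f x)) \<in> borel_measurable lborel"
      by (simp add: mult.assoc)
    then show ?thesis
      by (simp add: ennreal_mult' nn_integral_cmult)
  qed
  also have "\<dots> = c\<^sup>2 * (\<integral>x. \<phi> x \<partial>MA W u v)"
    by (simp add: enn2real_mult integral_MA_C2[OF W uv \<phi>])
  finally show ?thesis .
qed

lemma nn_integral_MA_test_function:
  assumes W: "open W" and uv: "COPSH W u" "COPSH W v"
    and \<phi>: "test_function W \<phi>" "\<And>x. 0 \<le> \<phi> x" "\<And>x. \<phi> x \<le> 1"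
  shows "(\<integral>\<^sup>+x. ennreal (\<phi> x) \<partial>MA W u v) = ennreal (\<integral>x. \<phi> x \<partial>MA W u v)"
proof -
  define S where "S = closure {x. \<phi> x \<noteq> 0}"
  have S: "compact S" "S \<subseteq> W"
    unfolding S_def using \<phi>(1)[unfolded test_function_def] by simp_all
  have sets: "sets (MA W u v) = sets borel"
    by (rule sets_MA[OF W uv])
  have \<phi>m: "\<phi> \<in> borel_measurable (MA W u v)"
    using \<phi>(1)
    by (simp add: test_function_def borel_measurable_continuous_onI
        measurable_cong_sets[OF sets refl])
  have "ennreal (\<phi> x) \<le> indicator S x" for x
  proof (cases "x \<in> S")
    case False
    then have "x \<notin> {x. \<phi> x \<noteq> 0}"
      unfolding S_def by (rule contra_subsetD[OF closure_subset])
    then show ?thesis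
      by simp
  qed (simp add: \<phi>(3))
  then have "(\<integral>\<^sup>+x. ennreal (\<phi> x) \<partial>MA W u v) \<le> (\<integral>\<^sup>+x. indicator S x \<partial>MA W u v)"
    by (rule nn_integral_mono)
  also have "\<dots> = emeasure (MA W u v) S"
    using S(1) sets by (simp add: borel_compact)
  also have "\<dots> < \<infinity>"
    by (rule emeasure_MA_compact_finite[OF W uv S])
  finally show ?thesis
    using \<phi>m \<phi>(2) by (simp add: integral_eq_nn_integral)
qed

lemma emeasure_MA_le_integral:
  assumes \<Omega>: "open \<Omega>" and W: "open W" "W \<subseteq> \<Omega>" and uv: "COPSH \<Omega> u" "COPSH \<Omega> v"
    and K: "compact K"
    and \<phi>: "test_function W \<phi>" "\<And>x. 0 \<le> \<phi> x" "\<And>x. \<phi> x \<le> 1" "\<And>x. x \<in> K \<Longrightarrow> \<phi> x = 1"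
  shows "emeasure (MA \<Omega> u v) K \<le> ennreal (\<integral>x. \<phi> x \<partial>MA W u v)"
proof -
  have KW: "K \<subseteq> W"
  proof
    fix x assume "x \<in> K"
    then show "x \<in> W"
      using \<phi>(4) by (intro test_function_support[OF \<phi>(1)]) simp
  qed
  have uvW: "COPSH W u" "COPSH W v"
    by (rule COPSH_subset[OF _ W(2)], fact)+
  have "emeasure (MA \<Omega> u v) K = emeasure (MA W u v) K"
    using K KW by (intro emeasure_MA_restrict[symmetric] \<Omega> W uv borel_compact)
  also have "\<dots> = (\<integral>\<^sup>+x. indicator K x \<partial>MA W u v)"
    using K sets_MA[OF W(1) uvW] by (simp add: borel_compact)
  also have "\<dots> \<le> (\<integral>\<^sup>+x. ennreal (\<phi> x) \<partial>MA W u v)"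
    using \<phi>(4) by (intro nn_integral_mono) (simp add: indicator_def)
  also have "\<dots> = ennreal (\<integral>x. \<phi> x \<partial>MA W u v)"
    by (rule nn_integral_MA_test_function[OF W(1) uvW \<phi>(1-3)])
  finally show ?thesis .
qed

lemma convergent_integral_MA_rescaled:
  assumes W: "open W" and \<phi>: "test_function W \<phi>"
    and w: "\<And>n. C2_COPSH_bounded W M (w n)" and w': "\<And>n. C2_COPSH_bounded W M (w' n)"
    and t: "\<And>n. 0 \<le> t n" "t \<longlonglongrightarrow> 0"
  shows "convergent (\<lambda>n. \<integral>x. \<phi> x \<partial>MA W (\<lambda>x. t n * w n x) (\<lambda>x. t n * w' n x))"
proof -
  have COPSH: "COPSH W (\<lambda>x. t n * w n x)" "COPSH W (\<lambda>x. t n * w' n x)" for n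
    using w w' t(1) by (auto simp: C2_COPSH_bounded_def intro: COPSH_cmult)
  have zero: "COPSH W (\<lambda>_. 0)"
    using w[of 0] COPSH_cmult[of W "w 0" 0] by (simp add: C2_COPSH_bounded_def)
  have bound: "\<bar>w n x\<bar> \<le> M" "\<bar>w' n x\<bar> \<le> M" if "x \<in> W" for n x
    using w[of n] w'[of n] that unfolding C2_COPSH_bounded_def by blast+
  have "uniform_limit W (\<lambda>n x. t n * w n x) (\<lambda>_. 0) sequentially"
    by (rule uniform_limit_mult_null_bounded[OF t(2)]) (rule bound(1))
  moreover have "uniform_limit W (\<lambda>n x. t n * w' n x) (\<lambda>_. 0) sequentially"
    by (rule uniform_limit_mult_null_bounded[OF t(2)]) (rule bound(2))
  ultimately have "(\<lambda>n. \<integral>x. \<phi> x \<partial>MA W (\<lambda>x. t n * w n x) (\<lambda>x. t n * w' n x))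
      \<longlonglongrightarrow> (\<integral>x. \<phi> x \<partial>MA W (\<lambda>_. 0) (\<lambda>_. 0))"
    by (rule integral_MA_tendsto[OF W COPSH zero zero _ _ \<phi>])
  then show ?thesis
    by (rule convergentI)
qed

lemma integral_MA_C2_bounded:
  assumes W: "open W" and \<phi>: "test_function W \<phi>" "\<And>x. 0 \<le> \<phi> x"
  obtains C where "\<And>w w'. C2_COPSH_bounded W M w \<Longrightarrow> C2_COPSH_bounded W M w' \<Longrightarrow>
    (\<integral>x. \<phi> x \<partial>MA W w w') \<le> C"
proof -
  let ?I = "\<lambda>w w'. \<integral>x. \<phi> x \<partial>MA W w w'"
  have "\<exists>C. \<forall>w w'. C2_COPSH_bounded W M w \<and> C2_COPSH_bounded W M w' \<longrightarrow> ?I w w' \<le> C"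
  proof (rule ccontr)
    assume "\<nexists>C. \<forall>w w'. C2_COPSH_bounded W M w \<and> C2_COPSH_bounded W M w' \<longrightarrow> ?I w w' \<le> C"
    then have "\<forall>n::nat. \<exists>w w'. C2_COPSH_bounded W M w \<and> C2_COPSH_bounded W M w' \<and>
        (real n + 1) ^ 3 < ?I w w'"
      by (meson not_le)
    then obtain w w' where w: "\<And>n. C2_COPSH_bounded W M (w n)"
      and w': "\<And>n. C2_COPSH_bounded W M (w' n)" and big: "\<And>n. (real n + 1) ^ 3 < ?I (w n) (w' n)"
      by metis
    define t where "t n = 1 / (real n + 1)" for n :: nat
    have t: "0 \<le> t n" "t \<longlonglongrightarrow> 0" for n
      unfolding t_def using LIMSEQ_inverse_real_of_nat by (auto simp: inverse_eq_divide add.commute)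
    let ?J = "\<lambda>n. ?I (\<lambda>x. t n * w n x) (\<lambda>x. t n * w' n x)"
    have "real n + 1 < ?J n" for n
    proof -
      have "real n + 1 = (t n)\<^sup>2 * (real n + 1) ^ 3"
        by (simp add: t_def power2_eq_square power3_eq_cube)
      also have "\<dots> < (t n)\<^sup>2 * ?I (w n) (w' n)"
        using big[of n] by (simp add: t_def)
      also have "\<dots> = ?J n"
        using w[of n] w'[of n] t(1)
        by (intro integral_MA_cmult_C2[OF W _ _ _ _ \<phi>, symmetric]) (auto simp: C2_COPSH_bounded_def)
      finally show ?thesis .
    qed
    moreover have "Bseq ?J"
      by (intro convergent_imp_Bseq convergent_integral_MA_rescaled[OF W \<phi>(1) w w' t])
    then obtain B where "\<And>n. norm (?J n) \<le> B"
      unfolding Bseq_def by blast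
    moreover obtain n :: nat where "B < real n"
      using reals_Archimedean2 by blast
    ultimately show False
      by (smt (verit) real_norm_def)
  qed
  then show thesis
    using that by blast
qed

lemma integral_MA_le_C2_bound:
  assumes W: "open W" and \<phi>: "test_function W \<phi>"
    and Q: "compact Q" "Q \<subseteq> \<Omega>" and \<delta>: "0 < \<delta>" and margin: "\<And>x. x \<in> W \<Longrightarrow> cball x \<delta> \<subseteq> Q"
    and M: "0 \<le> M"
    and C: "\<And>w w'. C2_COPSH_bounded W M w \<Longrightarrow> C2_COPSH_bounded W M w' \<Longrightarrow>
      (\<integral>x. \<phi> x \<partial>MA W w w') \<le> C"
    and u: "COPSH \<Omega> u" "\<And>x. x \<in> \<Omega> \<Longrightarrow> \<bar>u x\<bar> \<le> M"
    and v: "COPSH \<Omega> v" "\<And>x. x \<in> \<Omega> \<Longrightarrow> \<bar>v x\<bar> \<le> M"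
  shows "(\<integral>x. \<phi> x \<partial>MA W u v) \<le> C"
proof -
  have "W \<subseteq> \<Omega>"
    using margin Q(2) \<delta> by (meson centre_in_cball less_imp_le subset_iff)
  obtain w where w: "\<And>k. C2_COPSH_bounded W M (w k)" "uniform_limit W w u sequentially"
    using C2_COPSH_approximation[OF u M Q \<delta> margin] by blast
  obtain w' where w': "\<And>k. C2_COPSH_bounded W M (w' k)" "uniform_limit W w' v sequentially"
    using C2_COPSH_approximation[OF v M Q \<delta> margin] by blast
  have "(\<lambda>k. \<integral>x. \<phi> x \<partial>MA W (w k) (w' k)) \<longlonglongrightarrow> (\<integral>x. \<phi> x \<partial>MA W u v)"
    using w w' COPSH_subset[OF u(1) \<open>W \<subseteq> \<Omega>\<close>] COPSH_subset[OF v(1) \<open>W \<subseteq> \<Omega>\<close>]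
    by (intro integral_MA_tendsto[OF W _ _ _ _ _ _ \<phi>]) (auto simp: C2_COPSH_bounded_def)
  then show ?thesis
    using C w(1) w'(1) by (intro LIMSEQ_le_const2) auto
qed

end

theorem corollary4p2:
  fixes MA :: "oct2 set \<Rightarrow> (oct2 \<Rightarrow> real) \<Rightarrow> (oct2 \<Rightarrow> real) \<Rightarrow> oct2 measure"
    and \<Omega> :: "oct2 set" and M :: real
  assumes "is_mixed_oct_MA MA"
    and "open \<Omega>" and "M > 0"
  shows "\<forall>K. compact K \<and> K \<subseteq> \<Omega> \<longrightarrow>
           (\<exists>C::real. \<forall>u v. COPSH \<Omega> u \<and> (\<forall>x\<in>\<Omega>. \<bar>u x\<bar> \<le> M) \<and>
                              COPSH \<Omega> v \<and> (\<forall>x\<in>\<Omega>. \<bar>v x\<bar> \<le> M) \<longrightarrow>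
                              emeasure (MA \<Omega> u v) K \<le> ennreal C)"
proof (intro allI impI)
  fix K assume K: "compact K \<and> K \<subseteq> \<Omega>"
  obtain W Q \<delta> where W: "open W" "K \<subseteq> W" "W \<subseteq> \<Omega>" and Q: "compact Q" "Q \<subseteq> \<Omega>"
    and "0 < \<delta>" and margin: "\<And>x. x \<in> W \<Longrightarrow> cball x \<delta> \<subseteq> Q"
    using compact_margin[of K \<Omega>] K \<open>open \<Omega>\<close> by blast
  obtain \<phi> where \<phi>: "test_function W \<phi>" "\<And>x. 0 \<le> \<phi> x" "\<And>x. \<phi> x \<le> 1" "\<And>x. x \<in> K \<Longrightarrow> \<phi> x = 1"
    using cutoff_function[of K W] K W by blast
  obtain C where C: "\<And>w w'. C2_COPSH_bounded W M w \<Longrightarrow> C2_COPSH_bounded W M w' \<Longrightarrow>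
      (\<integral>x. \<phi> x \<partial>MA W w w') \<le> C"
    using integral_MA_C2_bounded[OF assms(1) W(1) \<phi>(1,2)] by blast
  show "\<exists>C::real. \<forall>u v. COPSH \<Omega> u \<and> (\<forall>x\<in>\<Omega>. \<bar>u x\<bar> \<le> M) \<and>
      COPSH \<Omega> v \<and> (\<forall>x\<in>\<Omega>. \<bar>v x\<bar> \<le> M) \<longrightarrow> emeasure (MA \<Omega> u v) K \<le> ennreal C"
  proof (intro exI allI impI)
    fix u v
    assume uv: "COPSH \<Omega> u \<and> (\<forall>x\<in>\<Omega>. \<bar>u x\<bar> \<le> M) \<and> COPSH \<Omega> v \<and> (\<forall>x\<in>\<Omega>. \<bar>v x\<bar> \<le> M)"
    have "emeasure (MA \<Omega> u v) K \<le> ennreal (\<integral>x. \<phi> x \<partial>MA W u v)"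
      using uv K by (intro emeasure_MA_le_integral[OF assms(1,2) W(1,3) _ _ _ \<phi>]) auto
    also have "\<dots> \<le> ennreal C"
      using uv \<open>M > 0\<close>
      by (intro ennreal_leI integral_MA_le_C2_bound[OF assms(1) W(1) \<phi>(1) Q \<open>0 < \<delta>\<close> margin _ C])
        auto
    finally show "emeasure (MA \<Omega> u v) K \<le> ennreal C" .
  qed
qed

end
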